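(* Let $k\ge 2$ be an odd integer which is not prime. Every $k$-$T_0T^\ast$-perfect number $n>1$ has the form $p_1^{2k-1}$ for a prime $p_1$, or the form $p_1^{(d-1)/2}\cdot p_2^{(k/d-1)/2}$ for distinct primes $p_1,p_2$, where $d$ is a positive divisor of $k$ satisfying $2<d<k$.
   Context: For a positive integer $m$, $T(m)$ denotes the product of all positive divisors of $m$, and $T^\ast(m)$ the product of all unitary divisors of $m$ (divisors $d$ with $\gcd(d,m/d)=1$). For an integer $K\ge 2$, an integer $n>1$ is called $K$-$T_0T^\ast$-perfect if $T(T^\ast(n))=n^K$. *)

theory Defs
  imports "HOL-Computational_Algebra.Primes"
begin

definition T :: "nat \<Rightarrow> nat" where
  "T m = (\<Prod>d\<in>{d. d dvd m}. d)"

definition Tstar :: "nat \<Rightarrow> nat" where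
  "Tstar m = (\<Prod>d\<in>{d. d dvd m \<and> coprime d (m div d)}. d)"

definition K_T0Tstar_perfect :: "nat \<Rightarrow> nat \<Rightarrow> bool" where
  "K_T0Tstar_perfect K n \<longleftrightarrow> 1 < n \<and> T (Tstar n) = n ^ K"

end

theory Submission
  imports Defs
begin

text \<open>
  The divisors of \<open>m\<close> pair off as \<open>d \<leftrightarrow> m div d\<close>, and so do its unitary divisors, which
  correspond to the subsets of the prime factors of \<open>m\<close>. Hence \<open>T m ^ 2 = m ^ \<tau>(m)\<close> and
  \<open>T\<^sup>* n ^ 2 = n ^ 2 ^ \<omega>(n)\<close>, and \<open>T (T\<^sup>* n) = n ^ k\<close> becomes
  \<open>4 k = 2 ^ \<omega>(n) \<tau>(T\<^sup>* n)\<close>. As \<open>k\<close> is odd, \<open>\<omega>(n) \<in> {1, 2}\<close>. If \<open>n = p ^ a\<close> then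
  \<open>T\<^sup>* n = n\<close> and \<open>2 k = a + 1\<close>; if \<open>n = p ^ a q ^ b\<close> then \<open>T\<^sup>* n = n ^ 2\<close> and
  \<open>k = (2 a + 1) (2 b + 1)\<close>, so \<open>d = 2 a + 1\<close> is the required divisor of \<open>k\<close>.
\<close>

lemma prod_squared_if_closed_under_cofactor:
  fixes m :: nat
  assumes "0 < m" "finite S" "\<And>d. d \<in> S \<Longrightarrow> d dvd m" "\<And>d. d \<in> S \<Longrightarrow> m div d \<in> S"
  shows "(\<Prod>S) ^ 2 = m ^ card S"
proof -
  have "\<Prod>S = (\<Prod>d\<in>S. m div d)"
    by (rule prod.reindex_bij_witness[where i="\<lambda>d. m div d" and j="\<lambda>d. m div d"])
       (use assms in \<open>auto simp: div_div_eq_right\<close>)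
  hence "(\<Prod>S) ^ 2 = (\<Prod>d\<in>S. d * (m div d))"
    by (simp add: power2_eq_square prod.distrib)
  also have "\<dots> = (\<Prod>d\<in>S. m)"
    using assms(3) by (intro prod.cong) auto
  finally show ?thesis by simp
qed

lemma T_squared: "0 < m \<Longrightarrow> T m ^ 2 = m ^ card {d. d dvd m}"
  unfolding T_def by (rule prod_squared_if_closed_under_cofactor) auto

definition unitary_divisors :: "nat \<Rightarrow> nat set" where
  "unitary_divisors n = {d. d dvd n \<and> coprime d (n div d)}"

lemma finite_unitary_divisors: "0 < n \<Longrightarrow> finite (unitary_divisors n)"
  unfolding unitary_divisors_def by (rule finite_subset[OF _ finite_divisors_nat]) auto

lemma Tstar_squared_card_unitary_divisors:
  assumes "0 < n"
  shows "Tstar n ^ 2 = n ^ card (unitary_divisors n)"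
proof -
  have "(\<Prod>(unitary_divisors n)) ^ 2 = n ^ card (unitary_divisors n)"
  proof (rule prod_squared_if_closed_under_cofactor)
    fix d assume d: "d \<in> unitary_divisors n"
    then show "d dvd n" by (simp add: unitary_divisors_def)
    have "n div (n div d) = d"
      using d assms by (auto simp: unitary_divisors_def div_div_eq_right)
    then show "n div d \<in> unitary_divisors n"
      using d by (auto simp: unitary_divisors_def coprime_commute)
  qed (use assms finite_unitary_divisors in auto)
  then show ?thesis by (simp add: Tstar_def unitary_divisors_def)
qed

lemma multiplicity_unitary_divisor:
  assumes "0 < n" "d \<in> unitary_divisors n" "prime p" "p dvd d"
  shows "multiplicity p d = multiplicity p n"
proof -
  have n: "n = d * (n div d)" and cop: "coprime d (n div d)"
    using assms(2) by (auto simp: unitary_divisors_def)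
  have nonzero: "d \<noteq> 0" "n div d \<noteq> 0"
    using assms(1) n by (metis mult_is_0 neq0_conv)+
  have "\<not> p dvd n div d"
    using cop assms(3,4) by (meson coprime_common_divisor not_prime_unit)
  then have "multiplicity p (n div d) = 0"
    by (rule not_dvd_imp_multiplicity_0)
  moreover have "multiplicity p n = multiplicity p d + multiplicity p (n div d)"
    using prime_elem_multiplicity_mult_distrib[of p d "n div d"] nonzero assms(3) n
    by (metis prime_imp_prime_elem)
  ultimately show ?thesis by simp
qed

lemma unitary_divisor_eq_prod_prime_powers:
  assumes "0 < n" "d \<in> unitary_divisors n"
  shows "(\<Prod>p\<in>prime_factors d. p ^ multiplicity p n) = d"
proof -
  have "0 < d"
    using assms by (auto simp: unitary_divisors_def intro: Nat.gr0I)
  then have "d = (\<Prod>p\<in>prime_factors d. p ^ multiplicity p d)"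
    by (rule prime_factorization_nat)
  also have "\<dots> = (\<Prod>p\<in>prime_factors d. p ^ multiplicity p n)"
    using assms by (intro prod.cong) (auto simp: multiplicity_unitary_divisor in_prime_factors_iff)
  finally show ?thesis by simp
qed

lemma prod_prime_powers_in_unitary_divisors:
  assumes "0 < n" "S \<subseteq> prime_factors n"
  shows "(\<Prod>p\<in>S. p ^ multiplicity p n) \<in> unitary_divisors n"
proof -
  define f where "f = (\<lambda>p::nat. p ^ multiplicity p n)"
  let ?P = "prime_factors n"
  have "n = prod f ?P"
    using prime_factorization_nat[OF assms(1)] by (simp add: f_def)
  also have "\<dots> = prod f (?P - S) * prod f S"
    by (rule prod.subset_diff[OF assms(2)]) simp
  finally have n: "n = prod f S * prod f (?P - S)"
    by (simp only: mult.commute)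
  have "0 < prod f S"
    unfolding f_def by (intro prod_pos) (meson assms(2) subsetD in_prime_factors_imp_prime prime_gt_0_nat zero_less_power)
  then have "n div prod f S = prod f (?P - S)"
    by (subst n) simp
  moreover have "coprime (f p) (f q)" if "p \<in> S" "q \<in> ?P - S" for p q
  proof -
    have "prime p" "prime q" "p \<noteq> q"
      using that assms(2) by auto
    then show ?thesis
      by (simp add: f_def primes_coprime)
  qed
  then have "coprime (prod f S) (prod f (?P - S))"
    by (intro prod_coprime_left prod_coprime_right)
  moreover have "prod f S dvd n"
    by (subst n) simp
  ultimately show ?thesis
    unfolding unitary_divisors_def f_def[symmetric] by simp
qed

lemma prime_factors_prod_prime_powers:
  assumes "S \<subseteq> prime_factors n"
  shows "prime_factors (\<Prod>p\<in>S. p ^ multiplicity p n) = S"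
proof -
  have "finite S"
    using assms by (rule finite_subset) simp
  moreover have "\<And>p. p \<in> S \<Longrightarrow> prime p \<and> 0 < multiplicity p n"
    using assms by (auto simp: prime_factors_multiplicity)
  ultimately show ?thesis
    by (auto simp: prime_factors_multiplicity multiplicity_prod_prime_powers split: if_splits)
qed

lemma card_unitary_divisors:
  assumes "0 < n"
  shows "card (unitary_divisors n) = 2 ^ card (prime_factors n)"
proof -
  have "bij_betw (\<lambda>S. \<Prod>p\<in>S. p ^ multiplicity p n) (Pow (prime_factors n)) (unitary_divisors n)"
  proof (rule bij_betw_byWitness[where f'=prime_factors])
    show "prime_factors ` unitary_divisors n \<subseteq> Pow (prime_factors n)"
      using assms by (auto simp: unitary_divisors_def prime_factors_dvd intro: dvd_trans)
  qed (use assms in \<open>auto simp: prime_factors_prod_prime_powers unitary_divisor_eq_prod_prime_powers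
                                 prod_prime_powers_in_unitary_divisors\<close>)
  then show ?thesis
    by (simp add: bij_betw_same_card[symmetric] card_Pow)
qed

lemma Tstar_squared: "0 < n \<Longrightarrow> Tstar n ^ 2 = n ^ 2 ^ card (prime_factors n)"
  by (simp add: Tstar_squared_card_unitary_divisors card_unitary_divisors)

lemma card_divisors_prime_power:
  fixes p :: nat
  assumes "prime p"
  shows "card {d. d dvd p ^ a} = a + 1"
proof -
  have "{d. d dvd p ^ a} = (\<lambda>i. p ^ i) ` {..a}"
    using divides_primepow_nat[OF assms] by auto
  moreover have "inj_on (\<lambda>i. p ^ i) {..a}"
    using prime_gt_1_nat[OF assms] by (auto simp: inj_on_def)
  ultimately show ?thesis by (simp add: card_image)
qed

lemma multiplicity_prime_power_times_other_prime_power: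
  fixes p q :: nat
  assumes "prime p" "prime q" "p \<noteq> q"
  shows "multiplicity p (p ^ i * q ^ j) = i"
proof -
  have "\<not> p dvd q ^ j"
    using assms by (metis prime_dvd_power primes_dvd_imp_eq)
  then have "multiplicity p (q ^ j) = 0"
    by (rule not_dvd_imp_multiplicity_0)
  moreover have "multiplicity p (p ^ i * q ^ j) = multiplicity p (p ^ i) + multiplicity p (q ^ j)"
    using assms by (intro prime_elem_multiplicity_mult_distrib) (auto simp: prime_gt_0_nat)
  ultimately show ?thesis
    using assms(1) by (simp add: multiplicity_same_power)
qed

lemma card_divisors_two_prime_powers:
  fixes p q :: nat
  assumes p: "prime p" and q: "prime q" and "p \<noteq> q"
  shows "card {d. d dvd p ^ a * q ^ b} = (a + 1) * (b + 1)"
proof -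
  have "{d. d dvd p ^ a * q ^ b} = (\<lambda>(i, j). p ^ i * q ^ j) ` ({..a} \<times> {..b})"
  proof (intro set_eqI iffI)
    fix d assume "d \<in> {d. d dvd p ^ a * q ^ b}"
    then obtain d1 d2 where "d = d1 * d2" "d1 dvd p ^ a" "d2 dvd q ^ b"
      using division_decomp by blast
    then show "d \<in> (\<lambda>(i, j). p ^ i * q ^ j) ` ({..a} \<times> {..b})"
      using divides_primepow_nat[OF p] divides_primepow_nat[OF q] by fastforce
  qed (auto intro!: mult_dvd_mono le_imp_power_dvd)
  moreover have "inj_on (\<lambda>(i, j). p ^ i * q ^ j) ({..a} \<times> {..b})"
    using multiplicity_prime_power_times_other_prime_power[OF p q \<open>p \<noteq> q\<close>]
      multiplicity_prime_power_times_other_prime_power[OF q p \<open>p \<noteq> q\<close>[symmetric]]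
    by (intro inj_onI) (metis case_prod_beta mult.commute prod_eqI)
  ultimately show ?thesis
    by (simp add: card_image card_cartesian_product)
qed

lemma T0Tstar_perfect_exponent_eq:
  assumes "K_T0Tstar_perfect k n"
  shows "4 * k = 2 ^ card (prime_factors n) * card {d. d dvd Tstar n}"
proof -
  have n: "1 < n" and perfect: "T (Tstar n) = n ^ k"
    using assms by (auto simp: K_T0Tstar_perfect_def)
  have "0 < Tstar n"
    using Tstar_squared[of n] n by (metis gr0I power_not_zero zero_power2 not_one_less_zero)
  have "n ^ (4 * k) = (T (Tstar n) ^ 2) ^ 2"
    using perfect by (simp add: power_mult[symmetric] mult.commute)
  also have "\<dots> = (Tstar n ^ 2) ^ card {d. d dvd Tstar n}"
    using T_squared[OF \<open>0 < Tstar n\<close>] by (simp add: power_mult[symmetric] mult.commute)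
  also have "\<dots> = n ^ (2 ^ card (prime_factors n) * card {d. d dvd Tstar n})"
    using n by (simp add: Tstar_squared power_mult)
  finally show ?thesis
    using n by simp
qed

lemma T0Tstar_perfect_card_prime_factors:
  assumes "K_T0Tstar_perfect k n" "odd k"
  shows "card (prime_factors n) \<in> {1, 2}"
proof -
  have "prime_factors n \<noteq> {}"
    using assms(1) by (simp add: K_T0Tstar_perfect_def prime_factorization_empty_iff)
  then have "card (prime_factors n) \<noteq> 0"
    by simp
  moreover have "card (prime_factors n) < 3"
  proof (rule ccontr)
    assume "\<not> card (prime_factors n) < 3"
    then have "2 ^ 3 dvd (2::nat) ^ card (prime_factors n)"
      by (intro le_imp_power_dvd) simp
    then have "2 ^ 3 dvd 4 * k"
      using T0Tstar_perfect_exponent_eq[OF assms(1)] by (metis dvd_mult2)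
    with assms(2) show False by simp
  qed
  ultimately have "card (prime_factors n) = 1 \<or> card (prime_factors n) = 2"
    by linarith
  then show ?thesis
    by simp
qed

lemma T0Tstar_perfect_one_prime_factor:
  assumes "K_T0Tstar_perfect k n" "prime_factors n = {p}"
  shows "n = p ^ (2 * k - 1)"
proof -
  have n: "0 < n" "n = p ^ multiplicity p n" and p: "prime p"
    using assms prime_factorization_nat[of n] by (auto simp: K_T0Tstar_perfect_def)
  have "Tstar n ^ 2 = n ^ 2"
    using Tstar_squared[OF n(1)] assms(2) by simp
  then have "Tstar n = n"
    by simp
  then have "card {d. d dvd Tstar n} = multiplicity p n + 1"
    using card_divisors_prime_power[OF p] n(2) by metis
  then have "4 * k = 2 * (multiplicity p n + 1)"
    using T0Tstar_perfect_exponent_eq[OF assms(1)] assms(2) by simp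
  then have "multiplicity p n = 2 * k - 1"
    by simp
  with n(2) show ?thesis
    by simp
qed

lemma T0Tstar_perfect_two_prime_factors:
  assumes "K_T0Tstar_perfect k n" "prime_factors n = {p, q}" "p \<noteq> q"
  shows "\<exists>d. d dvd k \<and> 2 < d \<and> d < k \<and> n = p ^ ((d - 1) div 2) * q ^ ((k div d - 1) div 2)"
proof -
  define a b where "a = multiplicity p n" and "b = multiplicity q n"
  have n: "0 < n" "n = p ^ a * q ^ b" and pq: "prime p" "prime q"
    using assms prime_factorization_nat[of n] by (auto simp: K_T0Tstar_perfect_def a_def b_def)
  have "0 < a" "0 < b"
    using assms(2) by (auto simp: a_def b_def prime_factors_multiplicity)
  have "Tstar n ^ 2 = (n ^ 2) ^ 2"
    using Tstar_squared[OF n(1)] assms(2,3) by (simp add: power_mult[symmetric])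
  then have "Tstar n = n ^ 2"
    by (metis power2_eq_iff_nonneg zero_le)
  then have "Tstar n = p ^ (2 * a) * q ^ (2 * b)"
    using n(2) by (simp add: power_mult_distrib power_mult mult.commute)
  then have k: "k = (2 * a + 1) * (2 * b + 1)"
    using T0Tstar_perfect_exponent_eq[OF assms(1)] card_divisors_two_prime_powers[OF pq assms(3)]
      assms(2,3) by simp
  have "2 * a + 1 dvd k"
    unfolding k by (rule dvd_triv_left)
  moreover have "k div (2 * a + 1) = 2 * b + 1"
    unfolding k by (rule nonzero_mult_div_cancel_left) simp
  ultimately show ?thesis
    using k n(2) \<open>0 < a\<close> \<open>0 < b\<close>
    by (intro exI[of _ "2 * a + 1"]) simp
qed

theorem mainTheorem11:
  fixes k n :: nat
  assumes "k \<ge> 2" and "odd k" and "\<not> prime k"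
    and "K_T0Tstar_perfect k n"
  shows "(\<exists>p1. prime p1 \<and> n = p1 ^ (2 * k - 1))
       \<or> (\<exists>p1 p2 d. prime p1 \<and> prime p2 \<and> p1 \<noteq> p2 \<and> d dvd k \<and> 2 < d \<and> d < k
            \<and> n = p1 ^ ((d - 1) div 2) * p2 ^ ((k div d - 1) div 2))"
proof -
  consider (one) p where "prime_factors n = {p}"
    | (two) p q where "prime_factors n = {p, q}" "p \<noteq> q"
    using T0Tstar_perfect_card_prime_factors[OF assms(4,2)] by (auto simp: card_1_singleton_iff card_2_iff)
  then show ?thesis
  proof cases
    case one
    then have "prime p"
      using in_prime_factors_imp_prime by blast
    then show ?thesis
      using T0Tstar_perfect_one_prime_factor[OF assms(4) one] by blast
  next
    case two
    then have "prime p" "prime q"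
      using in_prime_factors_imp_prime by blast+
    then show ?thesis
      using T0Tstar_perfect_two_prime_factors[OF assms(4) two] two(2) by blast
  qed
qed

end
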